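(* Let $Z(t)=\sum_{k=1}^{N(t)}X_k$ be a compound Poisson process with rate $\lambda>0$ whose iid jumps have a light right tail, let $S_k=X_1+\dots+X_k$, let $\Gamma_1<\Gamma_2<\dots$ be the arrival times of $N$, $\Gamma_0=0$, and $\tau=\max\{k\ge0:\Gamma_k<1\}$. Fix $b>0$, let $m=\min\{k:P(S_k>b)>0\}$, and set $a_k=\max\{1-(m+1)\log k/k,0\}$ for $k\ge1$, $a_0=0$. Define $Q(u)=P(Z(1)>u+b\Gamma_\tau,\ \Gamma_\tau\le a_\tau)$. Then $$\lim_{u\to\infty}\frac{Q(u)}{P(Z(1)>u+b)}=0.$$
   Context: A random variable $X$ has a light right tail if either (i) $P(X>u)>0$ for all $u>0$ and $\lim_{u\to\infty}P(X_1>u)/P(X_1+X_2>u)=0$, where $X_1,X_2$ are independent copies of $X$; or (ii) there are constants $A>0,\alpha>0$ with $X\le A$ a.s. and $P(X>\alpha)>0$. *)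

theory Defs
  imports "HOL-Probability.Probability"
begin

text \<open>Condition (i): tail positive everywhere and P(X1>u)/P(X1+X2>u) tends to 0,
  where X1+X2 (independent copies) has distribution mu convolved with mu.\<close>
definition light_right_tail :: "real measure \<Rightarrow> bool" where
  "light_right_tail mu \<longleftrightarrow>
     ((\<forall>u>0. measure mu {u<..} > 0) \<and>
      ((\<lambda>u. measure mu {u<..} / measure (mu \<star> mu) {u<..}) \<longlongrightarrow> 0) at_top)
   \<or> (\<exists>A>0. \<exists>\<alpha>>0. (AE x in mu. x \<le> A) \<and> measure mu {\<alpha><..} > 0)"

definition arrival :: "(nat \<Rightarrow> 'a \<Rightarrow> real) \<Rightarrow> nat \<Rightarrow> 'a \<Rightarrow> real" where
  "arrival E k \<omega> = (\<Sum>i\<in>{1..k}. E i \<omega>)"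

definition counting :: "(nat \<Rightarrow> 'a \<Rightarrow> real) \<Rightarrow> real \<Rightarrow> 'a \<Rightarrow> nat" where
  "counting E t \<omega> = card {k. 1 \<le> k \<and> arrival E k \<omega> \<le> t}"

definition compound :: "(nat \<Rightarrow> 'a \<Rightarrow> real) \<Rightarrow> (nat \<Rightarrow> 'a \<Rightarrow> real) \<Rightarrow> real \<Rightarrow> 'a \<Rightarrow> real" where
  "compound X E t \<omega> = (\<Sum>k\<in>{1..counting E t \<omega>}. X k \<omega>)"

definition tau :: "(nat \<Rightarrow> 'a \<Rightarrow> real) \<Rightarrow> 'a \<Rightarrow> nat" where
  "tau E \<omega> = (GREATEST k. arrival E k \<omega> < 1)"

definition aseq :: "nat \<Rightarrow> nat \<Rightarrow> real" where
  "aseq m k = (if k = 0 then 0 else max (1 - (real m + 1) * ln (real k) / real k) 0)"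

end

theory Submission
  imports Defs
begin

(*
  Write S_k = X_1 + ... + X_k, Fbar k u = P(S_k > u), and pois j = P(N(1) = j) = e^-l l^j / j!.

  On tau = k the event defining Q(u) forces Gamma_k <= a_k and S_k > u; these
  are independent, and P(Gamma_k <= a_k) <= (l a_k)^k / k! =: wt m k (Erlang tail).  Hence
      Q(u) <= sum_k wt m k * Fbar k u.  Splitting on N(1) = j gives
      P(Z(1) > u + b) >= Dlow u := sum_j pois j * Fbar j (u + b).  With c = Fbar m b > 0 (definition of m), supermultiplicativity
  Fbar k u * Fbar m b <= Fbar (k+m) (u+b) and the choice of a_k give, for large k,
  wt m k * Fbar k u <= e * pois (k+m) * Fbar (k+m) (u+b); finitely many small k are handled
  by the light right tail, which yields Fbar k u = o(Fbar (k+1) u) as u -> oo.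
  So sum_k wt m k * Fbar k u = o(Dlow u): for every e > 0, eventually Q(u) <= e P(Z(1) > u + b),
  and the limit follows (ratio_tendsto_zero).
*)

lemma (in prob_space) indep_vars_reindex:
  assumes inj: "inj_on f J" and ind: "indep_vars M' Y (f ` J)"
  shows "indep_vars (\<lambda>j. M' (f j)) (\<lambda>j. Y (f j)) J"
proof -
  have rv: "\<And>i. i \<in> f ` J \<Longrightarrow> random_variable (M' i) (Y i)"
    and isd: "indep_sets (\<lambda>i. sigma_sets (space M) {Y i -` A \<inter> space M |A. A \<in> sets (M' i)}) (f ` J)"
    using ind unfolding indep_vars_def by auto
  show ?thesis unfolding indep_vars_def
  proof safe
    fix j assume "j \<in> J" then show "random_variable (M' (f j)) (Y (f j))" using rv by auto
  next
    show "indep_sets (\<lambda>i. sigma_sets (space M) {Y (f i) -` A \<inter> space M |A. A \<in> sets (M' (f i))}) J"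
      unfolding indep_sets_def
    proof (intro conjI ballI allI impI subsetI)
      fix i x assume "i \<in> J" and "x \<in> sigma_sets (space M) {Y (f i) -` A \<inter> space M |A. A \<in> sets (M' (f i))}"
      then show "x \<in> events" using isd unfolding indep_sets_def by auto
    next
      fix K A assume K: "K \<subseteq> J" "K \<noteq> {}" "finite K"
      assume A: "A \<in> (\<Pi> i\<in>K. sigma_sets (space M) {Y (f i) -` A \<inter> space M |A. A \<in> sets (M' (f i))})"
      define B where "B = (\<lambda>i. A (the_inv_into K f i))"
      have injK: "inj_on f K" using inj K by (auto intro: inj_on_subset)
      have Bf: "\<And>k. k \<in> K \<Longrightarrow> B (f k) = A k"
        unfolding B_def using injK by (simp add: the_inv_into_f_f)
      have "prob (\<Inter> (B ` (f ` K))) = (\<Prod>j\<in>f ` K. prob (B j))"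
      proof (rule indep_setsD[OF isd])
        show "f ` K \<subseteq> f ` J" "f ` K \<noteq> {}" "finite (f ` K)" using K by auto
        show "\<forall>i\<in>f ` K. B i \<in> sigma_sets (space M) {Y i -` A \<inter> space M |A. A \<in> sets (M' i)}"
          using A Bf by auto
      qed
      moreover have "\<Inter> (B ` (f ` K)) = \<Inter> (A ` K)" using Bf by (auto simp: image_image)
      moreover have "(\<Prod>j\<in>f ` K. prob (B j)) = (\<Prod>j\<in>K. prob (A j))"
        using injK Bf by (simp add: prod.reindex)
      ultimately show "prob (\<Inter> (A ` K)) = (\<Prod>j\<in>K. prob (A j))" by simp
    qed
  qed
qed

lemma (in prob_space) distributed_null:
  fixes Y :: "'a \<Rightarrow> real"
  assumes D: "distributed M lborel Y g" and A: "A \<in> sets borel"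
    and Z: "AE x in lborel. x \<in> A \<longrightarrow> g x = 0"
  shows "emeasure M {\<omega>\<in>space M. Y \<omega> \<in> A} = 0"
proof -
  have Ym: "Y \<in> measurable M lborel" using distributed_measurable[OF D] .
  have gm: "g \<in> borel_measurable lborel" using distributed_borel_measurable[OF D] .
  have "emeasure M {\<omega>\<in>space M. Y \<omega> \<in> A} = emeasure (distr M lborel Y) A"
    using Ym A by (subst emeasure_distr) (auto intro!: arg_cong[where f="emeasure M"])
  also have "\<dots> = emeasure (density lborel g) A" by (simp add: distributed_distr_eq_density[OF D])
  also have "\<dots> = (\<integral>\<^sup>+x. g x * indicator A x \<partial>lborel)"
    using gm A by (subst emeasure_density) auto
  also have "\<dots> = (\<integral>\<^sup>+x. 0 \<partial>(lborel::real measure))"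
    by (rule nn_integral_cong_AE, rule AE_mp[OF Z]) (auto split: split_indicator)
  finally show ?thesis by simp
qed

lemma (in finite_measure) measure_mono_ambient:
  "A \<subseteq> B \<Longrightarrow> B \<in> sets M \<Longrightarrow> measure M A \<le> measure M B"
  by (cases "A \<in> sets M") (auto intro: finite_measure_mono simp: measure_notin_sets)

text \<open>a! b! \<le> (a+b)!, i.e. binomial coefficients are at least 1.\<close>
lemma fact_mult_le: "fact a * fact b \<le> (fact (a + b) :: real)"
proof (induction b)
  case 0 then show ?case by simp
next
  case (Suc b)
  have "fact a * fact (Suc b) = (real b + 1) * (fact a * fact b)" by (simp add: algebra_simps)
  also have "\<dots> \<le> (real (a + b) + 1) * fact (a + b)"
    using Suc by (intro mult_mono) auto
  also have "\<dots> = fact (a + Suc b)" by (simp add: algebra_simps)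
  finally show ?case .
qed

text \<open>The tail of the exponential series: the Erlang(n) distribution function at x is at
  most x^n/n!.  This bounds P(Gamma_n <= a).\<close>
lemma exp_tail_bound:
  fixes x :: real assumes x: "x \<ge> 0"
  shows "1 - (\<Sum>i<n. x ^ i * exp (- x) / fact i) \<le> x ^ n / fact n"
proof -
  define t where "t i = x ^ i / fact i" for i
  have st: "t sums exp x"
  proof -
    have "(\<lambda>n. inverse (fact n) * x ^ n) = t" by (auto simp: t_def fun_eq_iff divide_inverse)
    then show ?thesis using exp_converges[of x] by (simp add: real_scaleR_def)
  qed
  then have sm: "summable t" by (rule sums_summable)
  have "exp x = (\<Sum>j. t (j + n)) + (\<Sum>i<n. t i)"
    using suminf_split_initial_segment[OF sm, of n] sums_unique[OF st] by simp
  moreover have "(\<Sum>j. t (j + n)) \<le> (\<Sum>j. x ^ n / fact n * t j)"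
  proof (rule suminf_le)
    fix j
    have "t (j + n) = x ^ n * x ^ j / fact (j + n)" by (simp add: t_def power_add)
    also have "\<dots> \<le> x ^ n * x ^ j / (fact n * fact j)"
      using fact_mult_le[of n j] x by (intro divide_left_mono) (auto simp: add.commute)
    also have "\<dots> = x ^ n / fact n * t j" by (simp add: t_def)
    finally show "t (j + n) \<le> x ^ n / fact n * t j" .
  next
    show "summable (\<lambda>j. t (j + n))" using sm by (subst summable_iff_shift)
    show "summable (\<lambda>j. x ^ n / fact n * t j)" using sm by (rule summable_mult)
  qed
  moreover have "(\<Sum>j. x ^ n / fact n * t j) = x ^ n / fact n * exp x"
    using suminf_mult[OF sm, of "x ^ n / fact n"] sums_unique[OF st] by simp
  ultimately have le: "exp x - (\<Sum>i<n. t i) \<le> x ^ n / fact n * exp x" by linarith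
  have e: "exp (-x) * exp x = 1" by (simp add: exp_minus_inverse mult.commute)
  have "1 - (\<Sum>i<n. x ^ i * exp (- x) / fact i) = exp (-x) * (exp x - (\<Sum>i<n. t i))"
    by (simp add: t_def algebra_simps sum_distrib_left exp_minus_inverse)
  also have "\<dots> \<le> exp (-x) * (x ^ n / fact n * exp x)" using le by (intro mult_left_mono) auto
  also have "\<dots> = x ^ n / fact n" using e by (simp add: algebra_simps)
  finally show ?thesis .
qed

text \<open>(k+m)!/k! is a product of m factors, each at most k+m.\<close>
lemma fact_plus_le: "(fact (k + m) :: real) \<le> fact k * (real k + real m) ^ m"
proof (induction m)
  case 0 then show ?case by simp
next
  case (Suc m)
  have "(fact (k + Suc m) :: real) = (real k + real m + 1) * fact (k + m)" by (simp add: algebra_simps)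
  also have "\<dots> \<le> (real k + real m + 1) * (fact k * (real k + real m) ^ m)"
    using Suc by (intro mult_left_mono) auto
  also have "\<dots> \<le> (real k + real m + 1) * (fact k * (real k + real (Suc m)) ^ m)"
    by (intro mult_left_mono mult_left_mono power_mono) auto
  also have "\<dots> = fact k * (real k + real (Suc m)) ^ Suc m" by (simp add: algebra_simps)
  finally show ?case .
qed

lemma aseq_01: "0 \<le> aseq m k" "aseq m k \<le> 1"
proof -
  show "0 \<le> aseq m k" by (simp add: aseq_def)
  have "(real m + 1) * ln (real k) / real k \<ge> 0" if "k \<noteq> 0" using that by simp
  then show "aseq m k \<le> 1" by (auto simp: aseq_def)
qed

text \<open>The choice of a_k is made so that a_k^k \<le> e^{-(m+1) ln k} = k^{-(m+1)}.\<close>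
lemma aseq_pow_bound:
  assumes k: "k \<ge> 2"
  shows "aseq m k ^ k * real k ^ (m + 1) \<le> 1"
proof -
  have k0: "real k > 0" using k by simp
  define x where "x = (real m + 1) * ln (real k) / real k"
  have a: "aseq m k = max (1 - x) 0" using k by (simp add: aseq_def x_def)
  have "aseq m k \<le> exp (- x)"
    unfolding a using exp_ge_add_one_self[of "-x"] by simp
  then have "aseq m k ^ k \<le> exp (- x) ^ k" using aseq_01 by (intro power_mono)
  also have "\<dots> = exp (real k * (- x))" by (rule exp_of_nat_mult[symmetric])
  also have "real k * (- x) = - (real (m + 1) * ln (real k))" using k0 by (simp add: x_def)
  finally have "aseq m k ^ k \<le> exp (- (real (m + 1) * ln (real k)))" .
  moreover have "exp (real (m + 1) * ln (real k)) = real k ^ (m + 1)"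
    using k0 by (subst exp_of_nat_mult) simp
  ultimately have "aseq m k ^ k * real k ^ (m + 1)
      \<le> exp (- (real (m + 1) * ln (real k))) * exp (real (m + 1) * ln (real k))"
    by (metis mult_right_mono zero_le_power of_nat_0_le_iff)
  also have "\<dots> = 1" by (simp add: exp_minus_inverse mult.commute)
  finally show ?thesis .
qed

text \<open>Consequently (l a_k)^k / k! is eventually an arbitrarily small multiple of
  l^k / (k+m)!: the factor a_k^k beats the ratio (k+m)!/k! \<le> (2k)^m.\<close>
lemma aseq_weight_small:
  fixes l \<kappa> :: real
  assumes l: "l > 0" and kp: "\<kappa> > 0"
  shows "eventually (\<lambda>k. (l * aseq m k) ^ k / fact k \<le> \<kappa> * (l ^ k / fact (k + m))) sequentially"
proof -
  define N where "N = max (max m 2) (nat (ceiling (2 ^ m / \<kappa>)))"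
  show ?thesis unfolding eventually_sequentially
  proof (intro exI allI impI)
    fix k assume kN: "N \<le> k"
    have k2: "k \<ge> 2" and km: "k \<ge> m" using kN by (auto simp: N_def)
    have kk: "real k \<ge> 2 ^ m / \<kappa>" using kN unfolding N_def by linarith
    have k0: "real k > 0" using k2 by simp
    let ?a = "aseq m k"
    have ab: "?a ^ k * real k ^ (m + 1) \<le> 1" "0 \<le> ?a" using aseq_pow_bound[OF k2] aseq_01 by auto
    have "?a ^ k * fact (k + m) \<le> ?a ^ k * (fact k * (real k + real m) ^ m)"
      using fact_plus_le[of k m] ab by (intro mult_left_mono) auto
    also have "\<dots> \<le> ?a ^ k * (fact k * (2 * real k) ^ m)"
      using km ab by (intro mult_left_mono power_mono) auto
    also have "\<dots> = fact k * 2 ^ m * (?a ^ k * real k ^ (m + 1)) / real k"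
      using k0 by (simp add: power_mult_distrib field_simps)
    also have "\<dots> \<le> fact k * 2 ^ m * 1 / real k"
      using ab k0 by (intro divide_right_mono mult_left_mono) auto
    also have "\<dots> \<le> fact k * \<kappa>"
    proof -
      have "2 ^ m \<le> \<kappa> * real k" using kk kp by (simp add: field_simps)
      then show ?thesis using k0 by (simp add: field_simps)
    qed
    finally have main: "?a ^ k * fact (k + m) \<le> fact k * \<kappa>" .
    have "(l * ?a) ^ k / fact k = l ^ k * (?a ^ k * fact (k + m)) / (fact k * fact (k + m))"
      by (simp add: power_mult_distrib field_simps)
    also have "\<dots> \<le> l ^ k * (fact k * \<kappa>) / (fact k * fact (k + m))"
      using main l by (intro divide_right_mono mult_left_mono) auto
    also have "\<dots> = \<kappa> * (l ^ k / fact (k + m))" by (simp add: field_simps)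
    finally show "(l * ?a) ^ k / fact k \<le> \<kappa> * (l ^ k / fact (k + m))" .
  qed
qed

lemma convolution_tail:
  fixes P Q :: "real measure"
  assumes [simp]: "finite_measure P" "finite_measure Q" "sets P = sets borel" "sets Q = sets borel"
  shows "emeasure (P \<star> Q) {u<..} = (\<integral>\<^sup>+x. ennreal (measure Q {u-x<..}) \<partial>P)"
proof -
  have sp: "space P = space borel" "space Q = space borel" by (simp_all add: sets_eq_imp_space_eq)
  have "emeasure (P \<star> Q) {u<..} = (\<integral>\<^sup>+x. emeasure Q {a. a + x \<in> {u<..}} \<partial>P)"
    by (rule convolution_emeasure) (auto simp: sp)
  also have "\<dots> = (\<integral>\<^sup>+x. ennreal (measure Q {u-x<..}) \<partial>P)"
  proof (rule nn_integral_cong)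
    fix x
    have "{a. a + x \<in> {u<..}} = {u-x<..}" by auto
    then show "emeasure Q {a. a + x \<in> {u<..}} = ennreal (measure Q {u-x<..})"
      by (simp add: finite_measure.emeasure_eq_measure)
  qed
  finally show ?thesis .
qed

text \<open>x \<mapsto> Q(u - x, \<infinity>) is monotone, hence Borel measurable (needed to integrate it).\<close>
lemma shifted_tail_measurable:
  fixes Q :: "real measure"
  assumes [simp]: "finite_measure Q" "sets Q = sets borel"
  shows "(\<lambda>x. measure Q {u-x<..}) \<in> borel_measurable borel"
proof (rule borel_measurable_mono)
  show "mono (\<lambda>x. measure Q {u-x<..})"
    by (auto simp: mono_def intro!: finite_measure.finite_measure_mono)
qed

lemma suminf_shift_le:
  fixes g :: "nat \<Rightarrow> real"
  assumes "summable g" "\<And>n. g n \<ge> 0"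
  shows "(\<Sum>n. g (n + N)) \<le> suminf g"
proof -
  have "suminf g = (\<Sum>n. g (n + N)) + sum g {..<N}" by (rule suminf_split_initial_segment[OF assms(1)])
  moreover have "sum g {..<N} \<ge> 0" using assms(2) by (simp add: sum_nonneg)
  ultimately show ?thesis by simp
qed

lemma ratio_tendsto_zero:
  fixes q d :: "'b \<Rightarrow> real"
  assumes q: "\<And>u. q u \<ge> 0" and d: "\<And>u. d u \<ge> 0"
    and small: "\<And>e. e > 0 \<Longrightarrow> eventually (\<lambda>u. d u = 0 \<or> q u \<le> e * d u) F"
  shows "((\<lambda>u. q u / d u) \<longlongrightarrow> 0) F"
proof (rule order_tendstoI)
  fix a :: real assume "a < 0"
  then show "eventually (\<lambda>u. a < q u / d u) F"
    using q d by (intro always_eventually allI) (auto intro: less_le_trans divide_nonneg_nonneg)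
next
  fix a :: real assume a: "a > 0"
  have "a/2 > 0" using a by simp
  from small[OF this] show "eventually (\<lambda>u. q u / d u < a) F"
  proof eventually_elim
    case (elim u)
    show ?case
    proof (cases "d u = 0")
      case False
      then have "q u / d u \<le> a/2" using elim d[of u] by (simp add: divide_le_eq less_le)
      then show ?thesis using a by linarith
    qed (use a in simp)
  qed
qed


section \<open>The compound Poisson model\<close>

locale compound_poisson = prob_space M for M :: "'a measure" +
  fixes X E :: "nat \<Rightarrow> 'a \<Rightarrow> real" and l b :: real
  assumes l_pos: "l > 0" and b_pos: "b > 0"
    and X_measurable[measurable]: "\<And>k. k \<ge> 1 \<Longrightarrow> X k \<in> borel_measurable M"
    and E_measurable[measurable]: "\<And>k. k \<ge> 1 \<Longrightarrow> E k \<in> borel_measurable M"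
    and indep: "indep_vars (\<lambda>_. borel) (case_sum X E) (Inl ` {1..} \<union> Inr ` {1..})"
    and X_distr: "\<And>k. k \<ge> 1 \<Longrightarrow> distr M borel (X k) = distr M borel (X 1)"
    and E_distr: "\<And>k. k \<ge> 1 \<Longrightarrow> distributed M lborel (E k) (exponential_density l)"
    and light: "light_right_tail (distr M borel (X 1))"
begin

lemma E_Suc_measurable[measurable]: "E (Suc i) \<in> borel_measurable M"
  by (rule E_measurable) simp

text \<open>Block sums S k j = X_{k+1} + ... + X_{k+j}; in particular S 0 j = S_j.\<close>
definition S :: "nat \<Rightarrow> nat \<Rightarrow> 'a \<Rightarrow> real" where
  "S k j \<omega> = (\<Sum>i\<in>{Suc k..k+j}. X i \<omega>)"

abbreviation \<Gamma> :: "nat \<Rightarrow> 'a \<Rightarrow> real" where "\<Gamma> \<equiv> arrival E"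

lemma S_measurable[measurable]: "S k j \<in> borel_measurable M"
  unfolding S_def by (intro borel_measurable_sum) (auto intro: X_measurable)

lemma arrival_measurable[measurable]: "\<Gamma> k \<in> borel_measurable M"
  unfolding arrival_def by (intro borel_measurable_sum) (auto intro: E_measurable)

lemma S_Suc: "S k (Suc j) \<omega> = S k j \<omega> + X (Suc (k+j)) \<omega>"
  by (simp add: S_def)

lemma S_add: "S 0 (k + j) \<omega> = S 0 k \<omega> + S k j \<omega>"
proof -
  have "{Suc 0..k+j} = {Suc 0..k} \<union> {Suc k..k+j}" by auto
  then show ?thesis unfolding S_def by (subst sum.union_disjoint[symmetric]) auto
qed

lemma compound_eq_S: "counting E 1 \<omega> = j \<Longrightarrow> compound X E 1 \<omega> = S 0 j \<omega>"
  by (simp add: compound_def S_def)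

subsection \<open>Independence of disjoint blocks\<close>

lemma block_indep:
  assumes AB: "A \<subseteq> Inl ` {1..} \<union> Inr ` {1..}" "B \<subseteq> Inl ` {1..} \<union> Inr ` {1..}" "A \<inter> B = {}"
    and g: "g \<in> borel_measurable (PiM A (\<lambda>_. borel))"
    and h: "h \<in> borel_measurable (PiM B (\<lambda>_. borel))"
  shows "indep_var borel (\<lambda>\<omega>. g (\<lambda>i\<in>A. case_sum X E i \<omega>)) borel (\<lambda>\<omega>. h (\<lambda>i\<in>B. case_sum X E i \<omega>))"
  using indep_var_compose[OF indep_var_restrict[OF indep AB(3,1,2)] g h] unfolding o_def .

lemma S_indep_X: "indep_var borel (S k j) borel (X (Suc (k+j)))"
proof -
  let ?A = "Inl ` {Suc k..k+j} :: (nat+nat) set" and ?B = "{Inl (Suc (k+j))} :: (nat+nat) set"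
  have "indep_var borel (\<lambda>\<omega>. (\<lambda>h. \<Sum>i\<in>{Suc k..k+j}. h (Inl i)) (\<lambda>i\<in>?A. case_sum X E i \<omega>))
     borel (\<lambda>\<omega>. (\<lambda>h. h (Inl (Suc (k+j)))) (\<lambda>i\<in>?B. case_sum X E i \<omega>))"
    by (rule block_indep) (auto intro!: borel_measurable_sum measurable_component_singleton)
  also have "(\<lambda>\<omega>. (\<lambda>h. \<Sum>i\<in>{Suc k..k+j}. h (Inl i)) (\<lambda>i\<in>?A. case_sum X E i \<omega>)) = S k j"
    by (auto simp: S_def fun_eq_iff)
  also have "(\<lambda>\<omega>. (\<lambda>h. h (Inl (Suc (k+j)))) (\<lambda>i\<in>?B. case_sum X E i \<omega>)) = X (Suc (k+j))"
    by (auto simp: fun_eq_iff)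
  finally show ?thesis .
qed

lemma S_indep_S: "indep_var borel (S 0 k) borel (S k j)"
proof -
  let ?A = "Inl ` {Suc 0..k} :: (nat+nat) set" and ?B = "Inl ` {Suc k..k+j} :: (nat+nat) set"
  have "indep_var borel (\<lambda>\<omega>. (\<lambda>h. \<Sum>i\<in>{Suc 0..k}. h (Inl i)) (\<lambda>i\<in>?A. case_sum X E i \<omega>))
     borel (\<lambda>\<omega>. (\<lambda>h. \<Sum>i\<in>{Suc k..k+j}. h (Inl i)) (\<lambda>i\<in>?B. case_sum X E i \<omega>))"
    by (rule block_indep) (auto intro!: borel_measurable_sum measurable_component_singleton)
  also have "(\<lambda>\<omega>. (\<lambda>h. \<Sum>i\<in>{Suc 0..k}. h (Inl i)) (\<lambda>i\<in>?A. case_sum X E i \<omega>)) = S 0 k"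
    by (auto simp: S_def fun_eq_iff)
  also have "(\<lambda>\<omega>. (\<lambda>h. \<Sum>i\<in>{Suc k..k+j}. h (Inl i)) (\<lambda>i\<in>?B. case_sum X E i \<omega>)) = S k j"
    by (auto simp: S_def fun_eq_iff)
  finally show ?thesis .
qed

lemma S_indep_arrivals:
  fixes P :: "real \<Rightarrow> real \<Rightarrow> bool"
  assumes [measurable]: "Measurable.pred (borel \<Otimes>\<^sub>M borel) (\<lambda>(x,y). P x y)"
  shows "indep_var borel (S 0 k) borel (\<lambda>\<omega>. if P (\<Gamma> j \<omega>) (\<Gamma> (Suc j) \<omega>) then 1 else 0::real)"
proof -
  let ?A = "Inl ` {Suc 0..k} :: (nat+nat) set" and ?B = "Inr ` {1..Suc j} :: (nat+nat) set"
  let ?g = "\<lambda>h. if P (\<Sum>i\<in>{1..j}. h (Inr i)) (\<Sum>i\<in>{1..Suc j}. h (Inr i)) then 1 else 0::real"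
  have pair: "(\<lambda>h. (\<Sum>i\<in>{1..j}. h (Inr i) :: real, \<Sum>i\<in>{1..Suc j}. h (Inr i) :: real))
      \<in> measurable (PiM ?B (\<lambda>_. borel)) (borel \<Otimes>\<^sub>M borel)"
    by (intro measurable_Pair borel_measurable_sum measurable_component_singleton) auto
  have ind: "(\<lambda>p. if P (fst p) (snd p) then 1 else 0::real) \<in> borel_measurable (borel \<Otimes>\<^sub>M borel)"
  proof -
    have "Measurable.pred (borel \<Otimes>\<^sub>M borel) (\<lambda>p. P (fst p) (snd p))"
      using assms by (simp add: split_beta)
    then show ?thesis by (intro measurable_If measurable_const) auto
  qed
  have "indep_var borel (\<lambda>\<omega>. (\<lambda>h. \<Sum>i\<in>{Suc 0..k}. h (Inl i)) (\<lambda>i\<in>?A. case_sum X E i \<omega>))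
     borel (\<lambda>\<omega>. ?g (\<lambda>i\<in>?B. case_sum X E i \<omega>))"
  proof (rule block_indep)
    show "(\<lambda>h. \<Sum>i\<in>{Suc 0..k}. h (Inl i) :: real) \<in> borel_measurable (PiM ?A (\<lambda>_. borel))"
      by (rule borel_measurable_sum, rule measurable_component_singleton) auto
    from measurable_compose[OF pair ind] show "?g \<in> borel_measurable (PiM ?B (\<lambda>_. borel))"
      by simp
  qed auto
  also have "(\<lambda>\<omega>. (\<lambda>h. \<Sum>i\<in>{Suc 0..k}. h (Inl i)) (\<lambda>i\<in>?A. case_sum X E i \<omega>)) = S 0 k"
    by (auto simp: S_def fun_eq_iff)
  also have "(\<lambda>\<omega>. ?g (\<lambda>i\<in>?B. case_sum X E i \<omega>))
     = (\<lambda>\<omega>. if P (\<Gamma> j \<omega>) (\<Gamma> (Suc j) \<omega>) then 1 else 0::real)"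
    by (auto simp: arrival_def fun_eq_iff)
  finally show ?thesis .
qed

subsection \<open>Arrival times\<close>

lemma E_indep: "indep_vars (\<lambda>_. borel) E {1..}"
proof -
  have "indep_vars (\<lambda>_. borel) (case_sum X E) (Inr ` {1..})"
    by (rule indep_vars_subset[OF indep]) auto
  from indep_vars_reindex[OF _ this] show ?thesis by (simp add: inj_on_def)
qed

lemma arrival_erlang: "k \<ge> 1 \<Longrightarrow> distributed M lborel (\<Gamma> k) (erlang_density (k - 1) l)"
proof -
  assume k: "k \<ge> 1"
  have "distributed M lborel (\<lambda>x. \<Sum>i\<in>{1..k}. E i x) (erlang_density (card {1..k} - 1) l)"
    by (rule exponential_distributed_sum)
       (use k l_pos E_distr in \<open>auto intro: indep_vars_subset[OF E_indep]\<close>)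
  then show ?thesis by (simp add: arrival_def[abs_def])
qed

text \<open>Gamma_k is Erlang distributed, so P(Gamma_k \<le> a) is one minus a truncated Poisson sum.\<close>
lemma prob_arrival_le: assumes a: "a \<ge> 0"
  shows "prob {\<omega>\<in>space M. \<Gamma> k \<omega> \<le> a} = 1 - (\<Sum>i<k. (l*a)^i * exp (-(l*a)) / fact i)"
proof (cases "k = 0")
  case True
  then show ?thesis using a by (simp add: arrival_def prob_space)
next
  case False
  then have "prob {\<omega>\<in>space M. \<Gamma> k \<omega> \<le> a} = erlang_CDF (k - 1) l a"
    using erlang_distributed_le[OF arrival_erlang l_pos a] by simp
  also have "\<dots> = 1 - (\<Sum>i<k. (l*a)^i * exp (-(l*a)) / fact i)"
  proof -
    have "{..k-1} = {..<k}" using False by auto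
    then show ?thesis using a by (simp add: erlang_CDF_def)
  qed
  finally show ?thesis .
qed

lemma prob_arrival_le_bound: assumes a: "a \<ge> 0"
  shows "prob {\<omega>\<in>space M. \<Gamma> k \<omega> \<le> a} \<le> (l*a)^k / fact k"
  unfolding prob_arrival_le[OF a] using a l_pos by (intro exp_tail_bound) simp

lemma nonneg_iff: "(\<forall>i\<ge>1. E i \<omega> \<ge> 0) \<longleftrightarrow> (\<forall>i. E (Suc i) \<omega> \<ge> 0)"
  by (metis Suc_le_D Suc_le_mono le0 One_nat_def)

lemma E_nonneg_AE: "AE \<omega> in M. \<forall>i\<ge>1. E i \<omega> \<ge> 0"
proof -
  have "AE \<omega> in M. E i \<omega> \<ge> 0" if i: "i \<ge> 1" for i
  proof -
    have "emeasure M {\<omega>\<in>space M. E i \<omega> \<in> {..<0}} = 0"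
      using E_distr[OF i] by (rule distributed_null) (auto simp: exponential_density_def)
    then show ?thesis
      by (subst AE_iff_measurable[OF _ refl]) (use i in \<open>auto simp: not_le\<close>)
  qed
  then show ?thesis by (subst AE_all_countable) auto
qed

lemma arrival_ne1_AE: "AE \<omega> in M. \<forall>k. \<Gamma> k \<omega> \<noteq> 1"
proof -
  have "AE \<omega> in M. \<Gamma> k \<omega> \<noteq> 1" for k
  proof (cases "k = 0")
    case True then show ?thesis by (simp add: arrival_def)
  next
    case False
    have "emeasure M {\<omega>\<in>space M. \<Gamma> k \<omega> \<in> {1}} = 0"
    proof (rule distributed_null)
      show "distributed M lborel (\<Gamma> k) (erlang_density (k - 1) l)" using arrival_erlang[of k] False by simp
      show "AE x in lborel. x \<in> {1} \<longrightarrow> ennreal (erlang_density (k - 1) l x) = 0"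
        by (rule AE_mp[OF AE_lborel_singleton[of 1]]) auto
    qed auto
    then show ?thesis by (subst AE_iff_measurable[OF _ refl]) auto
  qed
  then show ?thesis by (subst AE_all_countable) auto
qed

lemma summable_exp_l: "summable (\<lambda>k. l ^ k / fact k)"
  using summable_exp[of l] by (simp add: divide_inverse mult.commute)

text \<open>Almost surely some arrival happens after time 1, since P(Gamma_n \<le> 1) \<le> l^n/n! \<rightarrow> 0.\<close>
lemma arrival_unbounded_AE: "AE \<omega> in M. \<exists>k. \<Gamma> k \<omega> \<ge> 1"
proof -
  let ?N = "{\<omega>\<in>space M. \<not> (\<exists>k. \<Gamma> k \<omega> \<ge> 1)}"
  have Ns: "?N \<in> sets M" by measurable
  have le: "prob ?N \<le> l ^ n / fact n" for n
  proof -
    have "prob ?N \<le> prob {\<omega>\<in>space M. \<Gamma> n \<omega> \<le> 1}"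
      by (rule finite_measure_mono) (auto simp: not_le intro: less_imp_le)
    also have "\<dots> \<le> (l * 1) ^ n / fact n" by (rule prob_arrival_le_bound) simp
    finally show ?thesis by simp
  qed
  have lim: "(\<lambda>n. l ^ n / fact n) \<longlonglongrightarrow> 0" by (rule summable_LIMSEQ_zero[OF summable_exp_l])
  have "prob ?N \<le> 0" by (rule LIMSEQ_le_const[OF lim]) (use le in auto)
  then have "emeasure M ?N = 0" using Ns by (simp add: emeasure_eq_measure measure_nonneg antisym)
  then show ?thesis by (subst AE_iff_measurable[OF Ns refl])
qed

lemma arrival_mono: assumes "\<forall>i\<ge>1. E i \<omega> \<ge> 0" "i \<le> j" shows "\<Gamma> i \<omega> \<le> \<Gamma> j \<omega>"
  unfolding arrival_def using assms by (intro sum_mono2) auto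

lemma arrival_nonneg: assumes "\<forall>i\<ge>1. E i \<omega> \<ge> 0" shows "\<Gamma> i \<omega> \<ge> 0"
  unfolding arrival_def using assms by (intro sum_nonneg) auto

definition good :: "'a set" where
  "good = {\<omega>\<in>space M. (\<forall>i. E (Suc i) \<omega> \<ge> 0) \<and> (\<forall>k. \<Gamma> k \<omega> \<noteq> 1) \<and> (\<exists>k. \<Gamma> k \<omega> \<ge> 1)}"

lemma good_sets: "good \<in> sets M" unfolding good_def by measurable

lemma good_AE: "AE \<omega> in M. \<omega> \<in> good"
  using E_nonneg_AE arrival_ne1_AE arrival_unbounded_AE AE_space
  by eventually_elim (auto simp: good_def nonneg_iff)

lemma tau_bracket:
  assumes nn: "\<forall>i\<ge>1. E i \<omega> \<ge> 0" and ex: "\<exists>k. \<Gamma> k \<omega> \<ge> 1" and ne: "\<forall>k. \<Gamma> k \<omega> \<noteq> 1"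
  shows "\<Gamma> (tau E \<omega>) \<omega> < 1 \<and> 1 < \<Gamma> (Suc (tau E \<omega>)) \<omega>"
proof -
  obtain K where K: "\<Gamma> K \<omega> \<ge> 1" using ex by blast
  have bnd: "y \<le> K" if y: "\<Gamma> y \<omega> < 1" for y
  proof (rule ccontr)
    assume "\<not> y \<le> K"
    then have "\<Gamma> K \<omega> \<le> \<Gamma> y \<omega>" using arrival_mono[OF nn, of K y] by simp
    then show False using K y by simp
  qed
  have P0: "\<Gamma> 0 \<omega> < 1" by (simp add: arrival_def)
  have "\<Gamma> (tau E \<omega>) \<omega> < 1"
    unfolding tau_def by (rule GreatestI_nat[where P="\<lambda>k. \<Gamma> k \<omega> < 1", OF P0 bnd])
  moreover have "\<not> \<Gamma> (Suc (tau E \<omega>)) \<omega> < 1"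
  proof
    assume "\<Gamma> (Suc (tau E \<omega>)) \<omega> < 1"
    from Greatest_le_nat[of "\<lambda>k. \<Gamma> k \<omega> < 1", OF this bnd] show False unfolding tau_def by simp
  qed
  ultimately show ?thesis using ne by (metis linorder_neqE_linordered_idom)
qed

lemma counting_eq:
  assumes nn: "\<forall>i\<ge>1. E i \<omega> \<ge> 0" and j: "\<Gamma> j \<omega> \<le> 1" "1 < \<Gamma> (Suc j) \<omega>"
  shows "counting E 1 \<omega> = j"
proof -
  have "{k. 1 \<le> k \<and> \<Gamma> k \<omega> \<le> 1} = {1..j}"
  proof (intro set_eqI iffI)
    fix k assume k: "k \<in> {k. 1 \<le> k \<and> \<Gamma> k \<omega> \<le> 1}"
    have "k \<le> j"
    proof (rule ccontr)
      assume "\<not> k \<le> j"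
      then have "\<Gamma> (Suc j) \<omega> \<le> \<Gamma> k \<omega>" using arrival_mono[OF nn, of "Suc j" k] by simp
      then show False using k j by simp
    qed
    then show "k \<in> {1..j}" using k by simp
  next
    fix k assume "k \<in> {1..j}"
    then show "k \<in> {k. 1 \<le> k \<and> \<Gamma> k \<omega> \<le> 1}" using j arrival_mono[OF nn, of k j] by simp
  qed
  then show ?thesis by (simp add: counting_def)
qed

lemma count_unique:
  assumes nn: "\<forall>i\<ge>1. E i \<omega> \<ge> 0"
    and i: "\<Gamma> i \<omega> \<le> 1" "1 < \<Gamma> (Suc i) \<omega>" and j: "\<Gamma> j \<omega> \<le> 1" "1 < \<Gamma> (Suc j) \<omega>"
  shows "i = j"
  using counting_eq[OF nn i] counting_eq[OF nn j] by simp

definition pois :: "nat \<Rightarrow> real" where "pois j = l^j * exp (-l) / fact j"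

lemma pois_pos: "pois j > 0" using l_pos by (simp add: pois_def)

lemma summable_pois: "summable pois"
proof -
  have "summable (\<lambda>j. exp (-l) * (l ^ j / fact j))" by (rule summable_mult[OF summable_exp_l])
  then show ?thesis by (simp add: pois_def[abs_def] mult.commute mult.left_commute)
qed

text \<open>P(N(1) = j) = P(Gamma_j \<le> 1) - P(Gamma_{j+1} \<le> 1) = pois j.\<close>
lemma prob_count: "prob {\<omega>\<in>space M. \<Gamma> j \<omega> \<le> 1 \<and> 1 < \<Gamma> (Suc j) \<omega>} = pois j"
proof -
  let ?A = "{\<omega>\<in>space M. \<Gamma> j \<omega> \<le> 1}" and ?B = "{\<omega>\<in>space M. \<Gamma> (Suc j) \<omega> \<le> 1}"
  have eq: "{\<omega>\<in>space M. \<Gamma> j \<omega> \<le> 1 \<and> 1 < \<Gamma> (Suc j) \<omega>} = ?A - ?B" by auto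
  have AB: "prob (?A \<inter> ?B) = prob ?B"
  proof (rule measure_eq_AE)
    show "AE x in M. (x \<in> ?A \<inter> ?B) = (x \<in> ?B)"
    proof (rule AE_mp[OF E_nonneg_AE], rule AE_I2, safe)
      fix x assume "\<forall>i\<ge>1. E i x \<ge> 0" "\<Gamma> (Suc j) x \<le> 1"
      then show "\<Gamma> j x \<le> 1" using arrival_mono[of x j "Suc j"] by simp
    qed
  qed auto
  have "prob {\<omega>\<in>space M. \<Gamma> j \<omega> \<le> 1 \<and> 1 < \<Gamma> (Suc j) \<omega>} = prob ?A - prob ?B"
    unfolding eq by (subst finite_measure_Diff') (auto simp: AB)
  also have "\<dots> = pois j" unfolding prob_arrival_le[of 1, simplified] by (simp add: pois_def)
  finally show ?thesis .
qed

subsection \<open>The tail function of the partial sums\<close>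

abbreviation \<mu> :: "real measure" where "\<mu> \<equiv> distr M borel (X 1)"

definition \<nu> :: "nat \<Rightarrow> real measure" where "\<nu> j = distr M borel (S 0 j)"

definition Fbar :: "nat \<Rightarrow> real \<Rightarrow> real" where "Fbar j u = prob {\<omega>\<in>space M. S 0 j \<omega> > u}"

lemma distr_S_Suc: "distr M borel (S k (Suc j)) = (distr M borel (S k j) \<star> \<mu>)"
proof -
  have "distr M borel (S k (Suc j)) = distr M borel (\<lambda>\<omega>. S k j \<omega> + X (Suc (k+j)) \<omega>)"
    by (rule arg_cong[where f="distr M borel"]) (simp add: fun_eq_iff S_Suc)
  also have "\<dots> = (distr M borel (S k j) \<star> distr M borel (X (Suc (k+j))))"
    by (rule sum_indep_random_variable[OF S_indep_X]) auto
  also have "distr M borel (X (Suc (k+j))) = \<mu>" by (rule X_distr) simp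
  finally show ?thesis .
qed

lemma distr_S: "distr M borel (S k j) = \<nu> j"
  unfolding \<nu>_def
proof (induction j)
  case 0
  show ?case by (simp add: S_def)
next
  case (Suc j)
  then show ?case by (simp only: distr_S_Suc)
qed

lemma \<nu>_prob[simp]: "prob_space (\<nu> j)" unfolding \<nu>_def by (rule prob_space_distr) simp
lemma \<nu>_finite[simp]: "finite_measure (\<nu> j)" using \<nu>_prob[of j] by (simp add: prob_space_def)
lemma \<nu>_sets[simp]: "sets (\<nu> j) = sets borel" by (simp add: \<nu>_def)
lemma \<mu>_prob[simp]: "prob_space \<mu>" by (rule prob_space_distr) simp
lemma \<mu>_finite[simp]: "finite_measure \<mu>" using \<mu>_prob by (simp add: prob_space_def)
text \<open>The same facts for X (Suc 0), the simplifier's normal form of X 1.\<close>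
lemma \<mu>_prob'[simp]: "prob_space (distr M borel (X (Suc 0)))"
  using \<mu>_prob[unfolded One_nat_def] .
lemma \<mu>_finite'[simp]: "finite_measure (distr M borel (X (Suc 0)))"
  using \<mu>_finite[unfolded One_nat_def] .

lemma \<nu>_1: "\<nu> (Suc 0) = \<mu>"
proof -
  have "S 0 (Suc 0) = X 1" by (simp add: S_def fun_eq_iff)
  then show ?thesis by (simp add: \<nu>_def)
qed
lemma \<nu>_Suc: "\<nu> (Suc j) = (\<nu> j \<star> \<mu>)" unfolding \<nu>_def by (rule distr_S_Suc)
lemma \<nu>_2: "\<nu> 2 = (\<mu> \<star> \<mu>)" using \<nu>_Suc[of 1] by (simp add: numeral_2_eq_2 \<nu>_1)

lemma \<nu>_Suc_Suc: "\<nu> (Suc (Suc k)) = (\<nu> k \<star> \<nu> 2)"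
proof -
  have "(\<nu> k \<star> \<nu> 2) = (\<nu> k \<star> (\<mu> \<star> \<mu>))" by (simp add: \<nu>_2)
  also have "\<dots> = ((\<nu> k \<star> \<mu>) \<star> \<mu>)" by (rule convolution_associative) auto
  finally show ?thesis by (simp add: \<nu>_Suc)
qed

lemma Fbar_\<nu>: "Fbar j u = measure (\<nu> j) {u<..}"
  unfolding Fbar_def \<nu>_def by (subst measure_distr) (auto intro!: arg_cong[where f=prob])

lemma emeasure_\<nu>: "emeasure (\<nu> j) {u<..} = ennreal (Fbar j u)"
  by (simp add: Fbar_\<nu> finite_measure.emeasure_eq_measure)

lemma prob_S: "prob {\<omega>\<in>space M. S k j \<omega> > u} = Fbar j u"
proof -
  have "prob {\<omega>\<in>space M. S k j \<omega> > u} = measure (distr M borel (S k j)) {u<..}"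
    by (subst measure_distr) (auto intro!: arg_cong[where f=prob])
  then show ?thesis by (simp add: distr_S Fbar_\<nu>)
qed

lemma Fbar_nonneg: "Fbar j u \<ge> 0" by (simp add: Fbar_def)
lemma Fbar_le1: "Fbar j u \<le> 1" by (simp add: Fbar_def)
lemma Fbar_mono: "u \<le> v \<Longrightarrow> Fbar j v \<le> Fbar j u"
  unfolding Fbar_def by (intro finite_measure_mono) auto
lemma Fbar_0: "u \<ge> 0 \<Longrightarrow> Fbar 0 u = 0" by (simp add: Fbar_def S_def)

text \<open>Supermultiplicativity: S_{k+j} > u + v whenever S_k > u and the independent next block
  exceeds v.\<close>
lemma Fbar_supermult: "Fbar k u * Fbar j v \<le> Fbar (k + j) (u + v)"
proof -
  have "Fbar k u * Fbar j v = prob {\<omega>\<in>space M. S 0 k \<omega> \<in> {u<..} \<and> S k j \<omega> \<in> {v<..}}"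
    using prob_indep_random_variable[OF S_indep_S, of "{u<..}" "{v<..}" k j] prob_S[where k=k and j=j and u=v]
    by (simp add: Fbar_def)
  also have "\<dots> \<le> Fbar (k + j) (u + v)"
    unfolding Fbar_def by (intro finite_measure_mono) (auto simp: S_add)
  finally show ?thesis .
qed

lemma Fbar_pow: "k \<ge> 1 \<Longrightarrow> Fbar 1 a ^ k \<le> Fbar k (real k * a)"
proof (induction k rule: nat_induct_at_least)
  case base then show ?case by simp
next
  case (Suc k)
  have "Fbar 1 a ^ Suc k = Fbar 1 a ^ k * Fbar 1 a" by (simp add: mult.commute)
  also have "\<dots> \<le> Fbar k (real k * a) * Fbar 1 a"
    using Suc.IH Fbar_nonneg by (intro mult_right_mono) auto
  also have "\<dots> \<le> Fbar (k + 1) (real k * a + a)" by (rule Fbar_supermult)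
  finally show ?case by (simp add: algebra_simps)
qed

text \<open>Conditioning on S_k: if P(X > s) \<le> e P(X_1 + X_2 > s) for s \<ge> t, then
  P(S_{k+1} > u) \<le> P(S_k > u - t) + e P(S_{k+2} > u).\<close>
lemma Fbar_Suc_split:
  assumes e: "e \<ge> 0" and t: "\<And>s. s \<ge> t \<Longrightarrow> Fbar 1 s \<le> e * Fbar 2 s"
  shows "Fbar (Suc k) u \<le> Fbar k (u - t) + e * Fbar (Suc (Suc k)) u"
proof -
  have m: "(\<lambda>x. ennreal (measure (\<nu> 2) {u-x<..})) \<in> borel_measurable (\<nu> k)"
  proof -
    have "(\<lambda>x. measure (\<nu> 2) {u-x<..}) \<in> borel_measurable borel"
      by (rule shifted_tail_measurable) auto
    then show ?thesis by (simp add: measurable_cong_sets[OF \<nu>_sets refl])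
  qed
  have "ennreal (Fbar (Suc k) u) = emeasure (\<nu> k \<star> \<mu>) {u<..}"
    by (simp add: emeasure_\<nu>[symmetric] \<nu>_Suc)
  also have "\<dots> = (\<integral>\<^sup>+x. ennreal (measure \<mu> {u-x<..}) \<partial>\<nu> k)"
    by (rule convolution_tail) auto
  also have "\<dots> \<le> (\<integral>\<^sup>+x. indicator {u-t<..} x + ennreal e * ennreal (measure (\<nu> 2) {u-x<..}) \<partial>\<nu> k)"
  proof (rule nn_integral_mono)
    fix x
    show "ennreal (measure \<mu> {u-x<..}) \<le> indicator {u-t<..} x + ennreal e * ennreal (measure (\<nu> 2) {u-x<..})"
    proof (cases "x > u - t")
      case True
      have "measure \<mu> {u-x<..} \<le> 1" by (rule prob_space.prob_le_1) simp
      then show ?thesis using True by (simp add: ennreal_le_1 add_increasing2)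
    next
      case False
      then have "measure \<mu> {u-x<..} \<le> e * measure (\<nu> 2) {u-x<..}"
        using t[of "u - x"] by (simp add: Fbar_\<nu> \<nu>_1)
      then have "ennreal (measure \<mu> {u-x<..}) \<le> ennreal e * ennreal (measure (\<nu> 2) {u-x<..})"
        using e by (simp add: ennreal_mult[symmetric] ennreal_leI)
      then show ?thesis by (simp add: add_increasing)
    qed
  qed
  also have "\<dots> = (\<integral>\<^sup>+x. indicator {u-t<..} x \<partial>\<nu> k) + ennreal e * (\<integral>\<^sup>+x. ennreal (measure (\<nu> 2) {u-x<..}) \<partial>\<nu> k)"
    using m by (subst nn_integral_add) (auto simp: nn_integral_cmult measurable_cong_sets[OF \<nu>_sets refl])
  also have "\<dots> = ennreal (Fbar k (u - t)) + ennreal e * emeasure (\<nu> k \<star> \<nu> 2) {u<..}"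
    by (subst convolution_tail) (auto simp: emeasure_\<nu>)
  also have "\<dots> = ennreal (Fbar k (u - t) + e * Fbar (Suc (Suc k)) u)"
    using e Fbar_nonneg by (simp add: \<nu>_Suc_Suc[symmetric] emeasure_\<nu> ennreal_mult ennreal_plus)
  finally have "ennreal (Fbar (Suc k) u) \<le> ennreal (Fbar k (u - t) + e * Fbar (Suc (Suc k)) u)" .
  moreover have "0 \<le> Fbar k (u - t) + e * Fbar (Suc (Suc k)) u" using e Fbar_nonneg by simp
  ultimately show ?thesis by (simp add: ennreal_le_iff)
qed

subsection \<open>Consequences of the light right tail\<close>

lemma light_cases:
  "((\<forall>u>0. Fbar 1 u > 0) \<and> ((\<lambda>u. Fbar 1 u / Fbar 2 u) \<longlongrightarrow> 0) at_top)
   \<or> (\<exists>A>0. \<exists>\<alpha>>0. (AE x in \<mu>. x \<le> A) \<and> Fbar 1 \<alpha> > 0)"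
proof -
  have "Fbar 1 u = measure \<mu> {u<..}" "Fbar 2 u = measure (\<mu> \<star> \<mu>) {u<..}" for u
    using Fbar_\<nu>[of 1 u] Fbar_\<nu>[of 2 u] by (simp_all add: \<nu>_1 \<nu>_2)
  then show ?thesis using light unfolding light_right_tail_def by simp
qed

lemma tail_ratio_1:
  assumes pos: "\<forall>u>0. Fbar 1 u > 0" and H: "((\<lambda>u. Fbar 1 u / Fbar 2 u) \<longlongrightarrow> 0) at_top"
    and e: "e > 0"
  shows "eventually (\<lambda>u. Fbar 1 u \<le> e * Fbar 2 u) at_top"
  using order_tendstoD(2)[OF H e] eventually_gt_at_top[of 0]
proof eventually_elim
  case (elim u)
  have "Fbar 1 (u/2) * Fbar 1 (u/2) \<le> Fbar (1+1) (u/2 + u/2)" by (rule Fbar_supermult)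
  moreover have "Fbar 1 (u/2) * Fbar 1 (u/2) > 0" using pos elim(2) by simp
  ultimately have "Fbar 2 u > 0" by (simp add: numeral_2_eq_2)
  then show ?case using elim(1) by (simp add: divide_less_eq)
qed

lemma tail_ratio:
  assumes pos: "\<forall>u>0. Fbar 1 u > 0" and H: "((\<lambda>u. Fbar 1 u / Fbar 2 u) \<longlongrightarrow> 0) at_top"
    and k: "k \<ge> 1"
  shows "\<forall>e>0. eventually (\<lambda>u. Fbar k u \<le> e * Fbar (Suc k) u) at_top"
  using k
proof (induction k rule: nat_induct_at_least)
  case base
  then show ?case using tail_ratio_1[OF pos H] by (simp add: numeral_2_eq_2)
next
  case (Suc k)
  show ?case
  proof (intro allI impI)
    fix e :: real assume e: "e > 0"
    obtain t0 where t0: "\<And>s. s \<ge> t0 \<Longrightarrow> Fbar 1 s \<le> (e/2) * Fbar 2 s"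
      using tail_ratio_1[OF pos H, of "e/2"] e by (auto simp: eventually_at_top_linorder)
    define t where "t = max t0 1"
    define c where "c = Fbar 1 t"
    have c: "c > 0" using pos by (simp add: c_def t_def)
    have split: "\<And>u. Fbar (Suc k) u \<le> Fbar k (u - t) + (e/2) * Fbar (Suc (Suc k)) u"
      by (rule Fbar_Suc_split) (use e t0 in \<open>auto simp: t_def\<close>)
    have "e * c / 2 > 0" using e c by simp
    with Suc.IH have "eventually (\<lambda>v. Fbar k v \<le> (e * c / 2) * Fbar (Suc k) v) at_top" by blast
    then obtain U where U: "\<And>v. v \<ge> U \<Longrightarrow> Fbar k v \<le> (e * c / 2) * Fbar (Suc k) v"
      by (auto simp: eventually_at_top_linorder)
    show "eventually (\<lambda>u. Fbar (Suc k) u \<le> e * Fbar (Suc (Suc k)) u) at_top"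
      unfolding eventually_at_top_linorder
    proof (intro exI allI impI)
      fix u assume u: "u \<ge> U + t"
      have "c * Fbar (Suc k) (u - t) \<le> Fbar (Suc (Suc k)) u"
        using Fbar_supermult[of 1 t "Suc k" "u - t"] by (simp add: c_def)
      then have "(e/2) * (c * Fbar (Suc k) (u - t)) \<le> (e/2) * Fbar (Suc (Suc k)) u"
        using e by (intro mult_left_mono) auto
      moreover have "Fbar k (u - t) \<le> (e * c / 2) * Fbar (Suc k) (u - t)" using U u by simp
      ultimately show "Fbar (Suc k) u \<le> e * Fbar (Suc (Suc k)) u" using split[of u] by simp
    qed
  qed
qed

lemma Fbar_bounded_jumps:
  assumes A: "AE x in \<mu>. x \<le> A" and u: "u \<ge> real j * A"
  shows "Fbar j u = 0"
proof -
  have "AE \<omega> in M. X i \<omega> \<le> A" if i: "i \<ge> 1" for i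
  proof -
    have "AE x in distr M borel (X i). x \<le> A" by (subst X_distr[OF i]) (rule A)
    then show ?thesis using i by (subst (asm) AE_distr_iff) auto
  qed
  then have "AE \<omega> in M. \<forall>i\<ge>1. X i \<omega> \<le> A" by (subst AE_all_countable) auto
  then have "AE \<omega> in M. \<not> (S 0 j \<omega> > u)"
  proof (rule AE_mp, intro AE_I2 impI)
    fix \<omega> assume h: "\<forall>i\<ge>1. X i \<omega> \<le> A"
    have "S 0 j \<omega> \<le> (\<Sum>i\<in>{Suc 0..j}. A)"
      unfolding S_def using h by (simp only: add_0) (rule sum_mono, auto)
    then show "\<not> (S 0 j \<omega> > u)" using u by simp
  qed
  then show ?thesis unfolding Fbar_def by (rule prob_eq_0_AE)
qed

text \<open>The index m of the theorem is well defined: some S_k exceeds b with positive probability.\<close>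
lemma exists_positive_tail: "\<exists>k. Fbar k b > 0"
  using light_cases
proof
  assume "(\<forall>u>0. Fbar 1 u > 0) \<and> ((\<lambda>u. Fbar 1 u / Fbar 2 u) \<longlongrightarrow> 0) at_top"
  then show ?thesis using b_pos by blast
next
  assume "\<exists>A>0. \<exists>\<alpha>>0. (AE x in \<mu>. x \<le> A) \<and> Fbar 1 \<alpha> > 0"
  then obtain \<alpha> where a: "\<alpha> > 0" "Fbar 1 \<alpha> > 0" by blast
  obtain n :: nat where n: "b / \<alpha> < real n" using reals_Archimedean2 by blast
  have "b \<le> real (Suc n) * \<alpha>" using n a by (simp add: field_simps)
  then have "Fbar (Suc n) (real (Suc n) * \<alpha>) \<le> Fbar (Suc n) b" by (rule Fbar_mono)
  then have "Fbar 1 \<alpha> ^ Suc n \<le> Fbar (Suc n) b" using Fbar_pow[of "Suc n" \<alpha>] by simp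
  moreover have "Fbar 1 \<alpha> ^ Suc n > 0" using a by simp
  ultimately show ?thesis by (intro exI[of _ "Suc n"]) linarith
qed

subsection \<open>Upper bound for Q\<close>

text \<open>wt m k bounds P(Gamma_k \<le> a_k), the price of an early k-th arrival.\<close>
definition wt :: "nat \<Rightarrow> nat \<Rightarrow> real" where "wt m k = (l * aseq m k) ^ k / fact k"

lemma wt_nonneg: "0 \<le> wt m k" using aseq_01[of m k] l_pos by (simp add: wt_def)

lemma summable_wt_Fbar: "summable (\<lambda>k. wt m k * Fbar k u)"
proof (rule summable_comparison_test[OF _ summable_exp_l], intro exI allI impI)
  fix k :: nat
  have "wt m k \<le> l ^ k / fact k"
    unfolding wt_def using aseq_01[of m k] l_pos
    by (intro divide_right_mono power_mono) (auto simp: mult_left_le)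
  moreover have "wt m k * Fbar k u \<le> wt m k"
    using wt_nonneg[of m k] Fbar_le1[of k u] by (simp add: mult_left_le)
  ultimately show "norm (wt m k * Fbar k u) \<le> l ^ k / fact k"
    using wt_nonneg[of m k] Fbar_nonneg[of k u] by simp
qed

lemma prob_S_arrivals:
  fixes P :: "real \<Rightarrow> real \<Rightarrow> bool"
  assumes [measurable]: "Measurable.pred (borel \<Otimes>\<^sub>M borel) (\<lambda>(x,y). P x y)"
  shows "prob {\<omega>\<in>space M. S 0 k \<omega> > u \<and> P (\<Gamma> j \<omega>) (\<Gamma> (Suc j) \<omega>)}
       = Fbar k u * prob {\<omega>\<in>space M. P (\<Gamma> j \<omega>) (\<Gamma> (Suc j) \<omega>)}"
proof -
  let ?Y = "\<lambda>\<omega>. if P (\<Gamma> j \<omega>) (\<Gamma> (Suc j) \<omega>) then 1 else 0::real"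
  have "\<P>(x in M. S 0 k x \<in> {u<..} \<and> ?Y x \<in> {1}) = \<P>(x in M. S 0 k x \<in> {u<..}) * \<P>(x in M. ?Y x \<in> {1})"
    by (rule prob_indep_random_variable[OF S_indep_arrivals[OF assms]]) auto
  moreover have "\<And>x. (?Y x = 1) = P (\<Gamma> j x) (\<Gamma> (Suc j) x)" by simp
  ultimately show ?thesis by (simp add: Fbar_def)
qed

definition Qprob :: "nat \<Rightarrow> real \<Rightarrow> real" where
  "Qprob m u = measure M {\<omega>\<in>space M.
              compound X E 1 \<omega> > u + b * arrival E (tau E \<omega>) \<omega> \<and>
              arrival E (tau E \<omega>) \<omega> \<le> aseq m (tau E \<omega>)}"

text \<open>An early k-th arrival and a large S_k: by independence and the Erlang tail,
  P(Gamma_k \<le> a_k, S_k > u) \<le> wt m k * Fbar k u.\<close>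
lemma prob_early_arrival_S:
  "prob {\<omega>\<in>space M. \<Gamma> k \<omega> \<le> aseq m k \<and> S 0 k \<omega> > u} \<le> wt m k * Fbar k u"
proof -
  have pm: "Measurable.pred (borel \<Otimes>\<^sub>M borel) (\<lambda>(x::real, y::real). x \<le> aseq m k)" by measurable
  have "prob {\<omega>\<in>space M. \<Gamma> k \<omega> \<le> aseq m k \<and> S 0 k \<omega> > u}
      = Fbar k u * prob {\<omega>\<in>space M. \<Gamma> k \<omega> \<le> aseq m k}"
    using prob_S_arrivals[OF pm, where k=k and u=u and j=k] by (simp add: conj_commute)
  also have "\<dots> \<le> Fbar k u * wt m k"
    using prob_arrival_le_bound[of "aseq m k" k] aseq_01[of m k] Fbar_nonneg[of k u]
    by (intro mult_left_mono) (auto simp: wt_def)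
  finally show ?thesis by (simp add: mult.commute)
qed

text \<open>On a good outcome Z(1) = S_tau, so the event defining Q(u) forces Gamma_tau \<le> a_tau
  and S_tau > u.\<close>
lemma Q_event_good:
  assumes "\<omega> \<in> good" and Z: "compound X E 1 \<omega> > u + b * \<Gamma> (tau E \<omega>) \<omega>"
  shows "S 0 (tau E \<omega>) \<omega> > u"
proof -
  have nn: "\<forall>i\<ge>1. E i \<omega> \<ge> 0" and ex: "\<exists>k. \<Gamma> k \<omega> \<ge> 1" and ne: "\<forall>k. \<Gamma> k \<omega> \<noteq> 1"
    using assms(1) by (auto simp: good_def nonneg_iff[symmetric])
  have "compound X E 1 \<omega> = S 0 (tau E \<omega>) \<omega>"
    using tau_bracket[OF nn ex ne] by (intro compound_eq_S counting_eq[OF nn]) auto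
  moreover have "b * \<Gamma> (tau E \<omega>) \<omega> \<ge> 0" using arrival_nonneg[OF nn] b_pos by simp
  ultimately show ?thesis using Z by simp
qed

text \<open>Splitting Q(u) according to the value k of tau: Q(u) \<le> sum_k P(Gamma_k \<le> a_k, S_k > u).\<close>
lemma Q_upper: "Qprob m u \<le> (\<Sum>k. wt m k * Fbar k u)"
proof -
  define C where "C k = {\<omega>\<in>space M. \<Gamma> k \<omega> \<le> aseq m k \<and> S 0 k \<omega> > u}" for k
  have Cs: "C k \<in> sets M" for k unfolding C_def by measurable
  have Cm: "measure M (C k) \<le> wt m k * Fbar k u" for k
    unfolding C_def by (rule prob_early_arrival_S)
  have sC: "summable (\<lambda>k. measure M (C k))"
    by (rule summable_comparison_test[OF _ summable_wt_Fbar[of m u]]) (use Cm in \<open>auto intro!: exI[of _ 0]\<close>)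
  let ?N = "space M - good"
  have Ns: "?N \<in> sets M" using good_sets by auto
  have N0: "measure M ?N = 0" using good_AE Ns by (subst prob_eq_0) auto
  have sub: "{\<omega>\<in>space M. compound X E 1 \<omega> > u + b * \<Gamma> (tau E \<omega>) \<omega> \<and>
              \<Gamma> (tau E \<omega>) \<omega> \<le> aseq m (tau E \<omega>)} \<subseteq> ?N \<union> (\<Union>k. C k)"
    using Q_event_good by (fastforce simp: C_def)
  have "Qprob m u \<le> measure M (?N \<union> (\<Union>k. C k))"
    unfolding Qprob_def by (rule measure_mono_ambient[OF sub]) (use Ns Cs in auto)
  also have "\<dots> \<le> measure M ?N + measure M (\<Union>k. C k)"
    by (rule measure_Un_le) (use Ns Cs in auto)
  also have "\<dots> \<le> (\<Sum>k. measure M (C k))"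
    using N0 by (simp add: finite_measure_subadditive_countably[OF _ sC] Cs image_subset_iff)
  also have "\<dots> \<le> (\<Sum>k. wt m k * Fbar k u)"
    by (rule suminf_le[OF Cm sC summable_wt_Fbar])
  finally show ?thesis .
qed

subsection \<open>Lower bound for P(Z(1) > v)\<close>

definition tail_Z :: "real \<Rightarrow> real" where
  "tail_Z v = measure M {\<omega>\<in>space M. compound X E 1 \<omega> > v}"

text \<open>On {N(1) = j} we have Z(1) = S_j, and N(1) is independent of S_j.\<close>
lemma prob_count_S: "prob {\<omega>\<in>space M. \<Gamma> j \<omega> \<le> 1 \<and> 1 < \<Gamma> (Suc j) \<omega> \<and> S 0 j \<omega> > v} = pois j * Fbar j v"
proof -
  have pm: "Measurable.pred (borel \<Otimes>\<^sub>M borel) (\<lambda>(x::real, y::real). x \<le> 1 \<and> 1 < y)" by measurable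
  show ?thesis
    using prob_S_arrivals[OF pm, where k=j and u=v and j=j] prob_count[of j]
    by (simp add: conj_commute conj_left_commute mult.commute)
qed

lemma tail_Z_lower_finite:
  assumes Zs: "{\<omega>\<in>space M. compound X E 1 \<omega> > v} \<in> sets M" and J: "finite J"
  shows "(\<Sum>j\<in>J. pois j * Fbar j v) \<le> tail_Z v"
proof -
  define A where "A j = {\<omega>\<in>space M. (\<forall>i. E (Suc i) \<omega> \<ge> 0) \<and> \<Gamma> j \<omega> \<le> 1 \<and> 1 < \<Gamma> (Suc j) \<omega> \<and> S 0 j \<omega> > v}" for j
  have As: "A j \<in> sets M" for j unfolding A_def by measurable
  have Am: "measure M (A j) = pois j * Fbar j v" for j
  proof -
    have "measure M (A j) = prob {\<omega>\<in>space M. \<Gamma> j \<omega> \<le> 1 \<and> 1 < \<Gamma> (Suc j) \<omega> \<and> S 0 j \<omega> > v}"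
    proof (rule measure_eq_AE)
      show "AE \<omega> in M. (\<omega> \<in> A j) =
          (\<omega> \<in> {\<omega>\<in>space M. \<Gamma> j \<omega> \<le> 1 \<and> 1 < \<Gamma> (Suc j) \<omega> \<and> S 0 j \<omega> > v})"
        using E_nonneg_AE by eventually_elim (auto simp: A_def nonneg_iff[symmetric])
    qed (use As in auto)
    then show ?thesis by (simp add: prob_count_S)
  qed
  have disj: "disjoint_family_on A J"
    unfolding disjoint_family_on_def
  proof (intro ballI impI)
    fix i j assume "i \<in> J" "j \<in> J" "i \<noteq> j"
    show "A i \<inter> A j = {}"
    proof (rule ccontr)
      assume "A i \<inter> A j \<noteq> {}"
      then obtain \<omega> where wi: "\<omega> \<in> A i" and wj: "\<omega> \<in> A j" by blast
      then have nn: "\<forall>i\<ge>1. E i \<omega> \<ge> 0" using nonneg_iff by (simp add: A_def)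
      have "i = j" by (rule count_unique[OF nn]) (use wi wj in \<open>auto simp: A_def\<close>)
      then show False using \<open>i \<noteq> j\<close> by simp
    qed
  qed
  have sub: "(\<Union>j\<in>J. A j) \<subseteq> {\<omega>\<in>space M. compound X E 1 \<omega> > v}"
  proof
    fix \<omega> assume "\<omega> \<in> (\<Union>j\<in>J. A j)"
    then obtain j where \<omega>: "\<omega> \<in> A j" by blast
    then have nn: "\<forall>i\<ge>1. E i \<omega> \<ge> 0" using nonneg_iff by (simp add: A_def)
    have "compound X E 1 \<omega> = S 0 j \<omega>"
      by (intro compound_eq_S counting_eq[OF nn]) (use \<omega> in \<open>auto simp: A_def\<close>)
    then show "\<omega> \<in> {\<omega>\<in>space M. compound X E 1 \<omega> > v}" using \<omega> by (auto simp: A_def)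
  qed
  have "(\<Sum>j\<in>J. pois j * Fbar j v) = measure M (\<Union>j\<in>J. A j)"
    using J disj As by (subst measure_finite_Union) (auto simp: Am)
  also have "\<dots> \<le> tail_Z v"
    unfolding tail_Z_def by (rule finite_measure_mono[OF sub Zs])
  finally show ?thesis .
qed

text \<open>The lower bound Dlow u \<le> P(Z(1) > u + b), obtained by splitting on N(1).\<close>
definition Dlow :: "real \<Rightarrow> real" where "Dlow u = (\<Sum>j. pois j * Fbar j (u + b))"

lemma summable_pois_Fbar: "summable (\<lambda>j. pois j * Fbar j v)"
proof (rule summable_comparison_test[OF _ summable_pois], intro exI allI impI)
  fix j :: nat
  show "norm (pois j * Fbar j v) \<le> pois j"
    using pois_pos[of j] Fbar_le1[of j v] Fbar_nonneg[of j v] by (simp add: mult_left_le)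
qed

lemma Dlow_nonneg: "Dlow u \<ge> 0"
  unfolding Dlow_def by (rule suminf_nonneg[OF summable_pois_Fbar]) (simp add: pois_pos Fbar_nonneg less_imp_le)

lemma Dlow_term: "pois j * Fbar j (u + b) \<le> Dlow u"
proof -
  have "sum (\<lambda>j. pois j * Fbar j (u + b)) {j} \<le> Dlow u"
    unfolding Dlow_def
    by (rule sum_le_suminf[OF summable_pois_Fbar]) (auto simp: pois_pos Fbar_nonneg less_imp_le)
  then show ?thesis by simp
qed

lemma tail_Z_lower: "tail_Z (u + b) = 0 \<or> Dlow u \<le> tail_Z (u + b)"
proof (cases "{\<omega>\<in>space M. compound X E 1 \<omega> > u + b} \<in> sets M")
  case True
  have "Dlow u \<le> tail_Z (u + b)"
    unfolding Dlow_def by (rule suminf_le_const[OF summable_pois_Fbar] tail_Z_lower_finite[OF True])+ simp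
  then show ?thesis ..
qed (simp add: tail_Z_def measure_notin_sets)

subsection \<open>Comparison of the two bounds\<close>

text \<open>Each single tail Fbar k u is negligible against Dlow u: in case (i) because
  Fbar k u = o(Fbar (k+1) u) and Fbar (k+1) u * Fbar 1 b \<le> Fbar (k+2) (u+b); in case (ii)
  because Fbar k u vanishes for large u.\<close>
lemma Fbar_negligible:
  assumes d: "\<delta> > 0"
  shows "eventually (\<lambda>u. Fbar k u \<le> \<delta> * Dlow u) at_top"
proof (cases "k = 0")
  case True
  show ?thesis using eventually_ge_at_top[of "0::real"]
    by eventually_elim (use True d Dlow_nonneg in \<open>simp add: Fbar_0\<close>)
next
  case False
  show ?thesis using light_cases
  proof
    assume H: "(\<forall>u>0. Fbar 1 u > 0) \<and> ((\<lambda>u. Fbar 1 u / Fbar 2 u) \<longlongrightarrow> 0) at_top"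
    have fb: "Fbar 1 b > 0" using H b_pos by blast
    define \<delta>' where "\<delta>' = \<delta> * pois (Suc (Suc k)) * Fbar 1 b"
    have "\<delta>' > 0" using d fb pois_pos by (simp add: \<delta>'_def)
    then have "eventually (\<lambda>u. Fbar k u \<le> \<delta>' * Fbar (Suc k) u) at_top"
      using tail_ratio[of k] H False by simp
    then show ?thesis
    proof eventually_elim
      case (elim u)
      have "\<delta>' * Fbar (Suc k) u = \<delta> * (pois (Suc (Suc k)) * (Fbar (Suc k) u * Fbar 1 b))"
        by (simp add: \<delta>'_def ac_simps)
      also have "\<dots> \<le> \<delta> * (pois (Suc (Suc k)) * Fbar (Suc (Suc k)) (u + b))"
        using Fbar_supermult[of "Suc k" u 1 b] pois_pos[of "Suc (Suc k)"] d
        by (intro mult_left_mono) simp_all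
      also have "\<dots> \<le> \<delta> * Dlow u" using Dlow_term d by (intro mult_left_mono) simp_all
      finally show ?case using elim by linarith
    qed
  next
    assume "\<exists>A>0. \<exists>\<alpha>>0. (AE x in \<mu>. x \<le> A) \<and> Fbar 1 \<alpha> > 0"
    then obtain A where A: "AE x in \<mu>. x \<le> A" by blast
    show ?thesis using eventually_ge_at_top[of "real k * A"]
      by eventually_elim (use Fbar_bounded_jumps[OF A] d Dlow_nonneg in simp)
  qed
qed

lemma weighted_head_negligible:
  assumes e: "e > 0"
  shows "eventually (\<lambda>u. (\<Sum>k<K. wt m k * Fbar k u) \<le> e * Dlow u) at_top"
proof -
  define \<delta> where "\<delta> = e / (real K + 1)"
  have dp: "\<delta> > 0" using e by (simp add: \<delta>_def)
  have each: "eventually (\<lambda>u. wt m k * Fbar k u \<le> \<delta> * Dlow u) at_top" for k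
  proof -
    have wp: "wt m k + 1 > 0" using wt_nonneg[of m k] by simp
    have "eventually (\<lambda>u. Fbar k u \<le> (\<delta> / (wt m k + 1)) * Dlow u) at_top"
      by (rule Fbar_negligible) (use dp wp in simp)
    then show ?thesis
    proof eventually_elim
      case (elim u)
      have "wt m k * Fbar k u \<le> wt m k * ((\<delta> / (wt m k + 1)) * Dlow u)"
        using elim wt_nonneg[of m k] by (intro mult_left_mono) auto
      also have "\<dots> = (wt m k / (wt m k + 1)) * (\<delta> * Dlow u)" by simp
      also have "\<dots> \<le> 1 * (\<delta> * Dlow u)"
        using wp dp Dlow_nonneg[of u] by (intro mult_right_mono) auto
      finally show ?case by simp
    qed
  qed
  have "eventually (\<lambda>u. \<forall>k\<in>{..<K}. wt m k * Fbar k u \<le> \<delta> * Dlow u) at_top"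
    using each by (intro eventually_ball_finite) auto
  then show ?thesis
  proof eventually_elim
    case (elim u)
    have "(\<Sum>k<K. wt m k * Fbar k u) \<le> real K * \<delta> * Dlow u"
      using elim sum_mono[of "{..<K}" "\<lambda>k. wt m k * Fbar k u" "\<lambda>_. \<delta> * Dlow u"] by simp
    moreover have "real K * \<delta> \<le> e" using e by (simp add: \<delta>_def field_simps)
    ultimately show ?case using Dlow_nonneg[of u] by (meson mult_right_mono order.trans)
  qed
qed

text \<open>If wt m k \<le> a * Fbar m b * pois (k+m) from K on, supermultiplicativity bounds the
  remaining weighted tails by a * Dlow u.\<close>
lemma weighted_tail_bound:
  assumes a: "a \<ge> 0" and wK: "\<And>k. k \<ge> K \<Longrightarrow> wt m k \<le> a * Fbar m b * pois (k + m)"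
  shows "(\<Sum>n. wt m (n + K) * Fbar (n + K) u) \<le> a * Dlow u"
proof -
  let ?h = "\<lambda>j. pois j * Fbar j (u + b)"
  have sh: "summable (\<lambda>n. ?h (n + (K + m)))" using summable_pois_Fbar by (subst summable_iff_shift)
  have "(\<Sum>n. wt m (n + K) * Fbar (n + K) u) \<le> (\<Sum>n. a * ?h (n + (K + m)))"
  proof (rule suminf_le)
    fix n
    have "wt m (n + K) * Fbar (n + K) u \<le> a * Fbar m b * pois (n + K + m) * Fbar (n + K) u"
      using wK[of "n + K"] Fbar_nonneg[of "n + K" u] by (intro mult_right_mono) auto
    also have "\<dots> = a * pois (n + K + m) * (Fbar (n + K) u * Fbar m b)" by simp
    also have "\<dots> \<le> a * pois (n + K + m) * Fbar (n + K + m) (u + b)"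
      using a pois_pos[of "n + K + m"] Fbar_supermult[of "n + K" u m b] by (intro mult_left_mono) auto
    finally show "wt m (n + K) * Fbar (n + K) u \<le> a * ?h (n + (K + m))" by (simp add: add.assoc)
  next
    show "summable (\<lambda>n. wt m (n + K) * Fbar (n + K) u)"
      using summable_wt_Fbar by (subst summable_iff_shift)
    show "summable (\<lambda>n. a * ?h (n + (K + m)))" using sh by (rule summable_mult)
  qed
  also have "\<dots> = a * (\<Sum>n. ?h (n + (K + m)))" by (rule suminf_mult[OF sh])
  also have "\<dots> \<le> a * Dlow u"
    unfolding Dlow_def using a
    by (intro mult_left_mono suminf_shift_le summable_pois_Fbar) (auto simp: pois_pos Fbar_nonneg less_imp_le)
  finally show ?thesis .
qed

text \<open>The main estimate: sum_k wt m k * Fbar k u = o(Dlow u), provided Fbar m b > 0.  By the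
  choice of a_k, eventually wt m k \<le> (e/2) * Fbar m b * pois (k+m); the remaining finitely
  many terms are handled by weighted_head_negligible.\<close>
lemma weighted_tails_negligible:
  assumes c: "Fbar m b > 0" and e: "e > 0"
  shows "eventually (\<lambda>u. (\<Sum>k. wt m k * Fbar k u) \<le> e * Dlow u) at_top"
proof -
  define \<kappa> where "\<kappa> = (e/2) * Fbar m b * l ^ m * exp (-l)"
  have kp: "\<kappa> > 0" using e c l_pos by (simp add: \<kappa>_def)
  obtain K where K: "\<And>k. k \<ge> K \<Longrightarrow> (l * aseq m k) ^ k / fact k \<le> \<kappa> * (l ^ k / fact (k + m))"
    using aseq_weight_small[OF l_pos kp, of m] unfolding eventually_sequentially by blast
  have wK: "wt m k \<le> (e/2) * Fbar m b * pois (k + m)" if "k \<ge> K" for k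
  proof -
    have "wt m k \<le> \<kappa> * (l ^ k / fact (k + m))" using K[OF that] by (simp add: wt_def)
    also have "\<dots> = (e/2) * Fbar m b * pois (k + m)" by (simp add: \<kappa>_def pois_def power_add field_simps)
    finally show ?thesis .
  qed
  have tail: "(\<Sum>n. wt m (n + K) * Fbar (n + K) u) \<le> (e/2) * Dlow u" for u
    by (rule weighted_tail_bound) (use e wK in auto)
  have "e/2 > 0" using e by simp
  from weighted_head_negligible[OF this, where K=K and m=m] show ?thesis
  proof eventually_elim
    case (elim u)
    then show ?case
      using tail[of u] suminf_split_initial_segment[OF summable_wt_Fbar, of m u K] by simp
  qed
qed

lemma Q_negligible:
  assumes c: "Fbar m b > 0" and e: "e > 0"
  shows "eventually (\<lambda>u. tail_Z (u + b) = 0 \<or> Qprob m u \<le> e * tail_Z (u + b)) at_top"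
  using weighted_tails_negligible[OF c e]
proof eventually_elim
  case (elim u)
  have "Qprob m u \<le> e * Dlow u" using Q_upper[of m u] elim by linarith
  then show ?case using tail_Z_lower[of u] e by (auto intro: order.trans mult_left_mono)
qed

end

theorem lemma5:
  fixes M :: "'a measure" and X E :: "nat \<Rightarrow> 'a \<Rightarrow> real" and l b :: real
  assumes "prob_space M"
    and "l > 0" and "b > 0"
    and "\<And>k. k \<ge> 1 \<Longrightarrow> X k \<in> borel_measurable M"
    and "\<And>k. k \<ge> 1 \<Longrightarrow> E k \<in> borel_measurable M"
    and "prob_space.indep_vars M (\<lambda>_. borel) (case_sum X E) (Inl ` {1..} \<union> Inr ` {1..})"
    and "\<And>k. k \<ge> 1 \<Longrightarrow> distr M borel (X k) = distr M borel (X 1)"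
    and "\<And>k. k \<ge> 1 \<Longrightarrow> distributed M lborel (E k) (exponential_density l)"
    and "light_right_tail (distr M borel (X 1))"
  defines "m \<equiv> (LEAST k. measure M {\<omega>\<in>space M. (\<Sum>i\<in>{1..k}. X i \<omega>) > b} > 0)"
  defines "Q \<equiv> (\<lambda>u. measure M {\<omega>\<in>space M.
              compound X E 1 \<omega> > u + b * arrival E (tau E \<omega>) \<omega> \<and>
              arrival E (tau E \<omega>) \<omega> \<le> aseq m (tau E \<omega>)})"
  shows "((\<lambda>u. Q u / measure M {\<omega>\<in>space M. compound X E 1 \<omega> > u + b}) \<longlongrightarrow> 0) at_top"
proof -
  interpret compound_poisson M X E l b
    unfolding compound_poisson_def compound_poisson_axioms_def using assms(1-9) by blast
  have "m = (LEAST k. Fbar k b > 0)" by (simp add: m_def Fbar_def S_def)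
  then have "Fbar m b > 0" using LeastI_ex[OF exists_positive_tail] by simp
  then have "((\<lambda>u. Qprob m u / tail_Z (u + b)) \<longlongrightarrow> 0) at_top"
    by (intro ratio_tendsto_zero Q_negligible) (auto simp: Qprob_def tail_Z_def)
  then show ?thesis by (simp add: Q_def Qprob_def tail_Z_def)
qed

end
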